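(* Let $d$ be a positive integer and let $\{x_1,\dots,x_{2d}\}\subset\mathbb{S}^{d-1}$ be a nearly orthogonal set of $2d$ distinct unit vectors. Then it is a tight frame, i.e. for every $y\in\mathbb{R}^d$, $$\sum_{i=1}^{2d}\langle x_i,y\rangle^2=2\|y\|^2 .$$
   Context: A set of nonzero vectors in $\mathbb{R}^d$ is nearly orthogonal if, among any three distinct vectors of the set, at least two are orthogonal. $\langle\cdot,\cdot\rangle$ is the Euclidean inner product and $\mathbb{S}^{d-1}$ is the unit sphere in $\mathbb{R}^d$. *)

theory Defs
  imports "HOL-Analysis.Analysis"
begin

definition nearly_orthogonal :: "'a::real_inner set \<Rightarrow> bool" where
  "nearly_orthogonal X \<longleftrightarrow> 0 \<notin> X \<and>
     (\<forall>u\<in>X. \<forall>v\<in>X. \<forall>w\<in>X. u \<noteq> v \<and> v \<noteq> w \<and> u \<noteq> w \<longrightarrow>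
        u \<bullet> v = 0 \<or> v \<bullet> w = 0 \<or> u \<bullet> w = 0)"

end

theory Submission
  imports Defs
begin

text \<open>Let \<open>T y = (\<Sum>x\<in>X. (x \<bullet> y) x)\<close> be the frame operator. Its trace is
\<open>\<Sum>x\<in>X. \<parallel>x\<parallel>\<^sup>2 = 2d\<close> and the squared Hilbert-Schmidt norm of \<open>T\<close> is the frame potential
\<open>\<Sum>x,z\<in>X. (x \<bullet> z)\<^sup>2\<close>. Near orthogonality makes the other vectors of \<open>X\<close> not
orthogonal to \<open>x\<close> an orthonormal set, so Bessel's inequality bounds each row of the
frame potential by \<open>1 + 1 = 2\<close> and the whole potential by \<open>4d\<close>. Hence
\<open>\<parallel>T - 2I\<parallel>\<^sub>H\<^sub>S\<^sup>2 = 4d - 4 \<cdot> 2d + 4d \<le> 0\<close>, i.e. \<open>T = 2I\<close>.\<close>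

lemma bessel_inequality:
  fixes x :: "'a::real_inner"
  assumes "finite N" and "\<And>z. z \<in> N \<Longrightarrow> norm z = 1" and "pairwise orthogonal N"
  shows "(\<Sum>z\<in>N. (x \<bullet> z)\<^sup>2) \<le> (norm x)\<^sup>2"
proof -
  define p where "p = (\<Sum>z\<in>N. (x \<bullet> z) *\<^sub>R z)"
  have orth: "pairwise (\<lambda>z w. orthogonal ((x \<bullet> z) *\<^sub>R z) ((x \<bullet> w) *\<^sub>R w)) N"
    using assms(3) by (auto simp: pairwise_def orthogonal_def)
  have norm_p: "(norm p)\<^sup>2 = (\<Sum>z\<in>N. (x \<bullet> z)\<^sup>2)"
    unfolding p_def using norm_sum_Pythagorean[OF assms(1) orth] assms(2) by simp
  have inner_p: "x \<bullet> p = (\<Sum>z\<in>N. (x \<bullet> z)\<^sup>2)"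
    unfolding p_def by (simp add: inner_sum_right power2_eq_square)
  have "0 \<le> (norm (x - p))\<^sup>2" by simp
  also have "\<dots> = (norm x)\<^sup>2 - 2 * (x \<bullet> p) + (norm p)\<^sup>2"
    by (simp add: power2_norm_eq_inner inner_diff_left inner_diff_right inner_commute)
  finally show ?thesis using norm_p inner_p by simp
qed

lemma nearly_orthogonal_sum_inner_sq_le:
  assumes "finite X" and unit: "\<And>z. z \<in> X \<Longrightarrow> norm z = 1"
    and "nearly_orthogonal X" and "x \<in> X"
  shows "(\<Sum>z\<in>X. (x \<bullet> z)\<^sup>2) \<le> 2"
proof -
  define N where "N = {z\<in>X. z \<noteq> x \<and> x \<bullet> z \<noteq> 0}"
  have "pairwise orthogonal N"
    using assms(3,4) unfolding N_def pairwise_def orthogonal_def nearly_orthogonal_def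
    by (metis (mono_tags, lifting) inner_commute mem_Collect_eq)
  moreover have "finite N" and "\<And>z. z \<in> N \<Longrightarrow> norm z = 1"
    using assms(1) unit by (auto simp: N_def)
  ultimately have bessel: "(\<Sum>z\<in>N. (x \<bullet> z)\<^sup>2) \<le> 1"
    using bessel_inequality[of N x] unit[OF \<open>x \<in> X\<close>] by simp
  have "x \<bullet> x = 1"
    using unit[OF \<open>x \<in> X\<close>] by (simp add: power2_norm_eq_inner[symmetric])
  then have "(\<Sum>z\<in>X. (x \<bullet> z)\<^sup>2) = 1 + (\<Sum>z\<in>X-{x}. (x \<bullet> z)\<^sup>2)"
    using assms(1,4) by (simp add: sum.remove)
  also have "(\<Sum>z\<in>X-{x}. (x \<bullet> z)\<^sup>2) = (\<Sum>z\<in>N. (x \<bullet> z)\<^sup>2)"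
    by (rule sum.mono_neutral_cong_right) (use assms(1) in \<open>auto simp: N_def\<close>)
  finally show ?thesis using bessel by simp
qed

definition frame_operator :: "'a::real_inner set \<Rightarrow> 'a \<Rightarrow> 'a" where
  "frame_operator X y = (\<Sum>x\<in>X. (x \<bullet> y) *\<^sub>R x)"

lemma linear_frame_operator: "linear (frame_operator X)"
  by (rule linearI)
    (simp_all add: frame_operator_def inner_add_right scaleR_add_left sum.distrib scaleR_sum_right)

lemma inner_frame_operator: "y \<bullet> frame_operator X y = (\<Sum>x\<in>X. (x \<bullet> y)\<^sup>2)"
  unfolding frame_operator_def by (simp add: inner_sum_right power2_eq_square inner_commute)

lemma sum_Basis_norm_frame_operator:
  fixes X :: "'a::euclidean_space set"
  shows "(\<Sum>b\<in>Basis. (norm (frame_operator X b))\<^sup>2) = (\<Sum>x\<in>X. \<Sum>z\<in>X. (x \<bullet> z)\<^sup>2)"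
proof -
  have "(norm (frame_operator X b))\<^sup>2 = (\<Sum>x\<in>X. \<Sum>z\<in>X. (x \<bullet> b) * (z \<bullet> b) * (x \<bullet> z))" for b
    unfolding frame_operator_def power2_norm_eq_inner
    by (simp add: inner_sum_left inner_sum_right sum_distrib_left inner_commute
        mult.commute mult.left_commute)
  then have "(\<Sum>b\<in>Basis. (norm (frame_operator X b))\<^sup>2)
      = (\<Sum>x\<in>X. \<Sum>z\<in>X. (x \<bullet> z) * (\<Sum>b\<in>Basis. (x \<bullet> b) * (z \<bullet> b)))"
    by (simp add: sum_distrib_left sum.swap[of _ Basis] mult.commute mult.left_commute)
  also have "\<dots> = (\<Sum>x\<in>X. \<Sum>z\<in>X. (x \<bullet> z)\<^sup>2)"
    by (simp add: euclidean_inner[symmetric] power2_eq_square)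
  finally show ?thesis .
qed

lemma sum_Basis_inner_frame_operator:
  fixes X :: "'a::euclidean_space set"
  shows "(\<Sum>b\<in>Basis. b \<bullet> frame_operator X b) = (\<Sum>x\<in>X. (norm x)\<^sup>2)"
proof -
  have "(\<Sum>b\<in>Basis. b \<bullet> frame_operator X b) = (\<Sum>x\<in>X. \<Sum>b\<in>Basis. (x \<bullet> b)\<^sup>2)"
    unfolding inner_frame_operator by (rule sum.swap)
  also have "\<dots> = (\<Sum>x\<in>X. (norm x)\<^sup>2)"
    by (metis (no_types, lifting) euclidean_inner power2_eq_square power2_norm_eq_inner sum.cong)
  finally show ?thesis .
qed

text \<open>The equality case of the frame potential bound: the potential is always at least
\<open>(\<Sum>x\<in>X. \<parallel>x\<parallel>\<^sup>2)\<^sup>2 / d\<close>, with equality exactly for tight frames.\<close>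

lemma tight_frame_if_frame_potential_le:
  fixes X :: "'a::euclidean_space set" and c :: real
  assumes trace: "(\<Sum>x\<in>X. (norm x)\<^sup>2) = c * real DIM('a)"
    and potential: "(\<Sum>x\<in>X. \<Sum>z\<in>X. (x \<bullet> z)\<^sup>2) \<le> c\<^sup>2 * real DIM('a)"
  shows "(\<Sum>x\<in>X. (x \<bullet> y)\<^sup>2) = c * (norm y)\<^sup>2"
proof -
  let ?T = "frame_operator X"
  have "(norm (?T b - c *\<^sub>R b))\<^sup>2 = (norm (?T b))\<^sup>2 - 2 * c * (b \<bullet> ?T b) + c\<^sup>2"
    if "b \<in> Basis" for b
    using that unfolding power2_norm_eq_inner
    by (simp add: inner_diff_left inner_diff_right inner_commute power2_eq_square)
  then have "(\<Sum>b\<in>Basis. (norm (?T b - c *\<^sub>R b))\<^sup>2)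
      = (\<Sum>b\<in>Basis. (norm (?T b))\<^sup>2) - 2 * c * (\<Sum>b\<in>Basis. b \<bullet> ?T b) + c\<^sup>2 * real DIM('a)"
    by (simp add: sum.distrib sum_subtractf sum_distrib_left)
  also have "\<dots> \<le> 0"
    using potential
    unfolding sum_Basis_norm_frame_operator sum_Basis_inner_frame_operator trace
    by (simp add: power2_eq_square)
  finally have "(\<Sum>b\<in>Basis. (norm (?T b - c *\<^sub>R b))\<^sup>2) = 0"
    by (simp add: order_antisym sum_nonneg)
  then have "(norm (?T b - c *\<^sub>R b))\<^sup>2 = 0" if "b \<in> Basis" for b
    using that by (simp add: sum_nonneg_eq_0_iff del: power_eq_0_iff)
  then have "?T = (\<lambda>y. c *\<^sub>R y)"
    by (intro linear_eq_stdbasis linear_frame_operator linear_scaleR) simp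
  then show ?thesis
    using inner_frame_operator[of y X] by (simp add: power2_norm_eq_inner)
qed

theorem corollary3p2:
  fixes X :: "'a::euclidean_space set"
  assumes "finite X"
    and "card X = 2 * DIM('a)"
    and "\<And>x. x \<in> X \<Longrightarrow> norm x = 1"
    and "nearly_orthogonal X"
  shows "\<forall>y::'a. (\<Sum>x\<in>X. (x \<bullet> y)\<^sup>2) = 2 * (norm y)\<^sup>2"
proof
  fix y :: 'a
  have "(\<Sum>x\<in>X. (norm x)\<^sup>2) = 2 * real DIM('a)"
    using assms(2,3) by simp
  moreover have "(\<Sum>x\<in>X. \<Sum>z\<in>X. (x \<bullet> z)\<^sup>2) \<le> (\<Sum>x\<in>X. 2)"
    using assms(1,3,4) by (intro sum_mono nearly_orthogonal_sum_inner_sq_le)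
  then have "(\<Sum>x\<in>X. \<Sum>z\<in>X. (x \<bullet> z)\<^sup>2) \<le> 2\<^sup>2 * real DIM('a)"
    using assms(2) by simp
  ultimately show "(\<Sum>x\<in>X. (x \<bullet> y)\<^sup>2) = 2 * (norm y)\<^sup>2"
    by (rule tight_frame_if_frame_potential_le)
qed

end
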